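(* Let $q$ be a positive rational number and let $M_q$ be the exponentially cyclic Puiseux monoid parametrized by $q$. If the monoid algebra $\mathbb{Z}[M_q]$ is atomic, then the monoid algebra $\mathbb{Q}[M_q]$ is atomic.
   Context: For a positive rational $q$, $M_q := \langle q^n : n \in \mathbb{N}_0 \rangle$ is the additive submonoid of $(\mathbb{Q}_{\geq 0},+)$ generated by the powers of $q$. For a commutative ring $R$, $R[M_q]$ denotes the monoid algebra: finite expressions $\sum_i r_i x^{m_i}$ with $r_i \in R$ and $m_i \in M_q$, with multiplication determined by $x^a x^b = x^{a+b}$. An integral domain is atomic if every nonzero nonunit is a finite product of irreducible elements. *)

theory Defs
  imports Complex_Main "HOL-Library.Poly_Mapping"
begin

inductive_set puiseux_exp_monoid :: "rat \<Rightarrow> rat set" for q :: rat where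
  zero: "0 \<in> puiseux_exp_monoid q"
| gen: "q ^ n \<in> puiseux_exp_monoid q"
| add: "a \<in> puiseux_exp_monoid q \<Longrightarrow> b \<in> puiseux_exp_monoid q \<Longrightarrow>
        a + b \<in> puiseux_exp_monoid q"

text \<open>The monoid algebra R[M] for a submonoid M of (Q,+), realised as the subring of the
  group algebra R[Q] = (rat =>_0 R) (finitely supported functions, convolution product)
  consisting of the elements whose support lies in M. The monomial x^m is
  Poly_Mapping.single m 1.\<close>
definition monoid_algebra :: "rat set \<Rightarrow> (rat \<Rightarrow>\<^sub>0 'r::comm_ring_1) set" where
  "monoid_algebra M = {f. Poly_Mapping.keys f \<subseteq> M}"

definition unit_in :: "'a::comm_ring_1 set \<Rightarrow> 'a \<Rightarrow> bool" where
  "unit_in S x \<longleftrightarrow> x \<in> S \<and> (\<exists>y\<in>S. x * y = 1)"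

definition irreducible_in :: "'a::comm_ring_1 set \<Rightarrow> 'a \<Rightarrow> bool" where
  "irreducible_in S x \<longleftrightarrow> x \<in> S \<and> x \<noteq> 0 \<and> \<not> unit_in S x \<and>
     (\<forall>a\<in>S. \<forall>b\<in>S. x = a * b \<longrightarrow> unit_in S a \<or> unit_in S b)"

definition atomic_in :: "'a::comm_ring_1 set \<Rightarrow> bool" where
  "atomic_in S \<longleftrightarrow> (\<forall>x\<in>S. x \<noteq> 0 \<and> \<not> unit_in S x \<longrightarrow>
     (\<exists>xs. xs \<noteq> [] \<and> (\<forall>a\<in>set xs. irreducible_in S a) \<and> prod_list xs = x))"

end

theory Submission
  imports Defs "HOL-Computational_Algebra.Primes"
begin

text \<open>Clearing denominators and dividing out the gcd of the coefficients writes every nonzero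
  element of \<open>\<rat>[M]\<close> as a nonzero constant times a primitive element of \<open>\<int>[M]\<close> with the
  same support. Since \<open>M \<subseteq> \<rat>\<^sub>\<ge>\<^sub>0\<close>, the least and the greatest exponents of a product are the
  sums of those of the factors, so the units of either algebra are the constant units. By
  Gauss's lemma any factorisation over \<open>\<rat>\<close> of a primitive element rescales to one over \<open>\<int>\<close>,
  so primitive irreducibles of \<open>\<int>[M]\<close> stay irreducible in \<open>\<rat>[M]\<close>; as factors of a primitive
  element are primitive, a factorisation into irreducibles of the primitive part of \<open>f\<close> in
  \<open>\<int>[M]\<close> yields one of \<open>f\<close> in \<open>\<rat>[M]\<close>.\<close>

section \<open>Finitely supported functions on an ordered group\<close>

lemma lookup_mult_eq_sum_keys:
  fixes f g :: "'a::ab_group_add \<Rightarrow>\<^sub>0 'b::comm_semiring_1"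
  shows "Poly_Mapping.lookup (f * g) k =
    (\<Sum>l\<in>Poly_Mapping.keys f. Poly_Mapping.lookup f l * Poly_Mapping.lookup g (k - l))"
proof -
  have "Sum_any (\<lambda>m. Poly_Mapping.lookup g m when k = l + m) = Poly_Mapping.lookup g (k - l)"
    for l
  proof -
    have "(\<lambda>m. Poly_Mapping.lookup g m when k = l + m) =
        (\<lambda>m. Poly_Mapping.lookup g m when m = k - l)"
      by (auto simp: when_def fun_eq_iff)
    then show ?thesis by (metis Sum_any_when_equal)
  qed
  then have "Poly_Mapping.lookup (f * g) k =
      Sum_any (\<lambda>l. Poly_Mapping.lookup f l * Poly_Mapping.lookup g (k - l))"
    by (simp add: lookup_mult)
  also have "\<dots> =
      (\<Sum>l\<in>Poly_Mapping.keys f. Poly_Mapping.lookup f l * Poly_Mapping.lookup g (k - l))"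
    by (rule Sum_any.expand_superset) (auto simp: in_keys_iff)
  finally show ?thesis .
qed

lemma lookup_single_zero_mult:
  "Poly_Mapping.lookup (Poly_Mapping.single 0 c * f) k = c * Poly_Mapping.lookup f k"
  by (simp flip: mult_map_scale_conv_mult add: Poly_Mapping.map.rep_eq when_def)

lemma keys_single_zero_mult:
  fixes f :: "'a::monoid_add \<Rightarrow>\<^sub>0 'b::{semiring_no_zero_divisors, comm_semiring_1}"
  assumes "c \<noteq> 0"
  shows "Poly_Mapping.keys (Poly_Mapping.single 0 c * f) = Poly_Mapping.keys f"
  using assms by (auto simp: in_keys_iff lookup_single_zero_mult)

lemma keys_subset_zero_imp_single:
  assumes "Poly_Mapping.keys f \<subseteq> {0}"
  shows "f = Poly_Mapping.single 0 (Poly_Mapping.lookup f 0)"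
  using assms by (intro poly_mapping_eqI) (auto simp: lookup_single when_def in_keys_iff)

lemma lookup_mult_unique_sum:
  fixes f g :: "'a::ab_group_add \<Rightarrow>\<^sub>0 'b::comm_semiring_1"
  assumes "\<And>a' b'. a' \<in> Poly_Mapping.keys f \<Longrightarrow> b' \<in> Poly_Mapping.keys g \<Longrightarrow>
      a' + b' = a + b \<Longrightarrow> a' = a"
  shows "Poly_Mapping.lookup (f * g) (a + b) = Poly_Mapping.lookup f a * Poly_Mapping.lookup g b"
proof -
  have "Poly_Mapping.lookup (f * g) (a + b) = (\<Sum>l\<in>Poly_Mapping.keys f.
      if l = a then Poly_Mapping.lookup f a * Poly_Mapping.lookup g b else 0)"
    unfolding lookup_mult_eq_sum_keys
  proof (rule sum.cong)
    fix l assume l: "l \<in> Poly_Mapping.keys f"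
    show "Poly_Mapping.lookup f l * Poly_Mapping.lookup g (a + b - l) =
        (if l = a then Poly_Mapping.lookup f a * Poly_Mapping.lookup g b else 0)"
    proof (cases "l = a")
      case False
      then have "a + b - l \<notin> Poly_Mapping.keys g"
        using assms[of l "a + b - l"] l by auto
      with False show ?thesis by (simp add: in_keys_iff)
    qed simp
  qed simp
  also have "\<dots> = Poly_Mapping.lookup f a * Poly_Mapping.lookup g b"
    by (simp add: in_keys_iff)
  finally show ?thesis .
qed

lemma Min_keys_add_in_keys_mult:
  fixes f g :: "'a::linordered_ab_group_add \<Rightarrow>\<^sub>0 'b::idom"
  assumes "f \<noteq> 0" "g \<noteq> 0"
  shows "Min (Poly_Mapping.keys f) + Min (Poly_Mapping.keys g) \<in> Poly_Mapping.keys (f * g)"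
proof -
  have "Poly_Mapping.lookup (f * g) (Min (Poly_Mapping.keys f) + Min (Poly_Mapping.keys g)) =
      Poly_Mapping.lookup f (Min (Poly_Mapping.keys f)) *
      Poly_Mapping.lookup g (Min (Poly_Mapping.keys g))"
    by (rule lookup_mult_unique_sum)
      (metis Min_le add_le_imp_le_right add_left_mono antisym finite_keys)
  moreover have "Min (Poly_Mapping.keys f) \<in> Poly_Mapping.keys f"
    "Min (Poly_Mapping.keys g) \<in> Poly_Mapping.keys g"
    using assms by simp_all
  ultimately show ?thesis
    by (simp add: in_keys_iff)
qed

lemma Max_keys_add_in_keys_mult:
  fixes f g :: "'a::linordered_ab_group_add \<Rightarrow>\<^sub>0 'b::idom"
  assumes "f \<noteq> 0" "g \<noteq> 0"
  shows "Max (Poly_Mapping.keys f) + Max (Poly_Mapping.keys g) \<in> Poly_Mapping.keys (f * g)"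
proof -
  have "Poly_Mapping.lookup (f * g) (Max (Poly_Mapping.keys f) + Max (Poly_Mapping.keys g)) =
      Poly_Mapping.lookup f (Max (Poly_Mapping.keys f)) *
      Poly_Mapping.lookup g (Max (Poly_Mapping.keys g))"
    by (rule lookup_mult_unique_sum)
      (metis Max_ge add_le_imp_le_right add_left_mono antisym finite_keys)
  moreover have "Max (Poly_Mapping.keys f) \<in> Poly_Mapping.keys f"
    "Max (Poly_Mapping.keys g) \<in> Poly_Mapping.keys g"
    using assms by simp_all
  ultimately show ?thesis
    by (simp add: in_keys_iff)
qed

definition of_int_coeffs :: "('a \<Rightarrow>\<^sub>0 int) \<Rightarrow> ('a \<Rightarrow>\<^sub>0 'b::ring_1)" where
  "of_int_coeffs f = Poly_Mapping.map of_int f"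

lemma lookup_of_int_coeffs:
  "Poly_Mapping.lookup (of_int_coeffs f) k = of_int (Poly_Mapping.lookup f k)"
  by (simp add: of_int_coeffs_def Poly_Mapping.map.rep_eq when_def)

lemma keys_of_int_coeffs [simp]:
  "Poly_Mapping.keys (of_int_coeffs f :: 'a \<Rightarrow>\<^sub>0 'b::ring_char_0) = Poly_Mapping.keys f"
  by (auto simp: in_keys_iff lookup_of_int_coeffs)

lemma of_int_coeffs_eq_0_iff [simp]:
  "(of_int_coeffs f :: 'a \<Rightarrow>\<^sub>0 'b::ring_char_0) = 0 \<longleftrightarrow> f = 0"
  by (metis keys_eq_empty keys_of_int_coeffs)

lemma of_int_coeffs_mult:
  fixes f g :: "'a::ab_group_add \<Rightarrow>\<^sub>0 int"
  shows "(of_int_coeffs (f * g) :: 'a \<Rightarrow>\<^sub>0 'b::{comm_ring_1, ring_char_0}) =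
    of_int_coeffs f * of_int_coeffs g"
  by (rule poly_mapping_eqI) (simp add: lookup_of_int_coeffs lookup_mult_eq_sum_keys)

lemma of_int_coeffs_single:
  "of_int_coeffs (Poly_Mapping.single k c) = Poly_Mapping.single k (of_int c)"
  by (rule poly_mapping_eqI) (simp add: lookup_of_int_coeffs lookup_single when_def)

lemma of_int_coeffs_prod_list:
  fixes fs :: "('a::ab_group_add \<Rightarrow>\<^sub>0 int) list"
  shows "(of_int_coeffs (prod_list fs) :: 'a \<Rightarrow>\<^sub>0 'b::{comm_ring_1, ring_char_0}) =
    prod_list (map of_int_coeffs fs)"
  by (induction fs) (simp_all add: of_int_coeffs_mult of_int_coeffs_single flip: single_one)

lemma unit_in_mult:
  assumes "\<And>a b. a \<in> S \<Longrightarrow> b \<in> S \<Longrightarrow> a * b \<in> S"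
    and "unit_in S x" "unit_in S y"
  shows "unit_in S (x * y)"
proof -
  obtain x' y' where "x' \<in> S" "x * x' = 1" "y' \<in> S" "y * y' = 1"
    using assms(2,3) by (auto simp: unit_in_def)
  then have "(x * y) * (x' * y') = 1"
    by (metis mult.left_commute mult.right_neutral mult.assoc)
  then show ?thesis
    using assms \<open>x' \<in> S\<close> \<open>y' \<in> S\<close> by (auto simp: unit_in_def)
qed

lemma irreducible_in_unit_mult:
  assumes mult_closed: "\<And>a b. a \<in> S \<Longrightarrow> b \<in> S \<Longrightarrow> a * b \<in> S"
    and u: "unit_in S u" and x: "irreducible_in S x"
  shows "irreducible_in S (u * x)"
proof -
  obtain v where v: "v \<in> S" "u * v = 1"
    using u by (auto simp: unit_in_def)
  have v_unit: "unit_in S v"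
    using u v by (auto simp: unit_in_def mult.commute)
  have cancel: "v * (u * y) = y" "u * (v * y) = y" for y
    using v by (metis mult.assoc mult.commute mult_1)+
  have "u * x \<in> S" "u * x \<noteq> 0"
    using u x cancel(1)[of x] by (auto simp: unit_in_def irreducible_in_def intro: mult_closed)
  moreover have "\<not> unit_in S (u * x)"
    using unit_in_mult[OF mult_closed v_unit] x cancel(1)[of x] by (metis irreducible_in_def)
  moreover have "unit_in S a \<or> unit_in S b"
    if "a \<in> S" "b \<in> S" "u * x = a * b" for a b
  proof -
    have "x = (v * a) * b"
      using cancel(1)[of x] that(3) by (simp add: mult.assoc)
    then have "unit_in S (v * a) \<or> unit_in S b"
      using x that v by (auto simp: irreducible_in_def intro: mult_closed)
    then show ?thesis
      using unit_in_mult[OF mult_closed u, of "v * a"] cancel(2)[of a] by auto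
  qed
  ultimately show ?thesis
    by (auto simp: irreducible_in_def)
qed

section \<open>Primitive elements and Gauss's lemma\<close>

lemma prime_elem_dvd_coeffs_mult:
  fixes f g :: "'a::linordered_ab_group_add \<Rightarrow>\<^sub>0 'b::comm_ring_1"
  assumes p: "prime_elem p"
    and f: "\<not> (\<forall>k. p dvd Poly_Mapping.lookup f k)" and g: "\<not> (\<forall>k. p dvd Poly_Mapping.lookup g k)"
  shows "\<not> (\<forall>k. p dvd Poly_Mapping.lookup (f * g) k)"
proof -
  txt \<open>Only the term \<open>f\<^sub>i g\<^sub>j\<close> of the coefficient of \<open>f * g\<close> at \<open>i + j\<close> escapes divisibility by
    \<open>p\<close>.\<close>
  define i where "i = Min {k. \<not> p dvd Poly_Mapping.lookup f k}"
  define j where "j = Min {k. \<not> p dvd Poly_Mapping.lookup g k}"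
  have fin: "finite {k. \<not> p dvd Poly_Mapping.lookup h k}" for h :: "'a \<Rightarrow>\<^sub>0 'b"
    by (rule finite_subset[of _ "Poly_Mapping.keys h"]) (auto simp: in_keys_iff)
  have i: "\<not> p dvd Poly_Mapping.lookup f i" "\<And>l. l < i \<Longrightarrow> p dvd Poly_Mapping.lookup f l"
    using f Min_in[OF fin[of f]] Min_le[OF fin[of f]] unfolding i_def by (auto simp flip: not_le)
  have j: "\<not> p dvd Poly_Mapping.lookup g j" "\<And>l. l < j \<Longrightarrow> p dvd Poly_Mapping.lookup g l"
    using g Min_in[OF fin[of g]] Min_le[OF fin[of g]] unfolding j_def by (auto simp flip: not_le)
  have "p dvd Poly_Mapping.lookup f l * Poly_Mapping.lookup g (i + j - l)" if "l \<noteq> i" for l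
  proof (cases "l < i")
    case False
    with that have "i + j - l < j"
      by (simp add: algebra_simps)
    then show ?thesis using j(2) by simp
  qed (use i(2) in simp)
  then have rest: "p dvd (\<Sum>l\<in>Poly_Mapping.keys f - {i}.
      Poly_Mapping.lookup f l * Poly_Mapping.lookup g (i + j - l))"
    by (intro dvd_sum) simp
  have "i \<in> Poly_Mapping.keys f"
    using i(1) by (auto simp: in_keys_iff)
  then have "Poly_Mapping.lookup (f * g) (i + j) =
      Poly_Mapping.lookup f i * Poly_Mapping.lookup g j + (\<Sum>l\<in>Poly_Mapping.keys f - {i}.
        Poly_Mapping.lookup f l * Poly_Mapping.lookup g (i + j - l))"
    unfolding lookup_mult_eq_sum_keys by (simp add: sum.remove)
  moreover have "\<not> p dvd Poly_Mapping.lookup f i * Poly_Mapping.lookup g j"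
    using p i(1) j(1) by (simp add: prime_elem_dvd_mult_iff)
  ultimately have "\<not> p dvd Poly_Mapping.lookup (f * g) (i + j)"
    using rest by (simp add: dvd_add_left_iff)
  then show ?thesis by blast
qed

definition primitive :: "('a \<Rightarrow>\<^sub>0 int) \<Rightarrow> bool" where
  "primitive f \<longleftrightarrow> (\<forall>p. prime p \<longrightarrow> \<not> (\<forall>k. p dvd Poly_Mapping.lookup f k))"

lemma not_primitive_zero: "\<not> primitive 0"
  unfolding primitive_def by (auto intro!: exI[of _ "2 :: int"])

lemma primitive_mult:
  fixes f g :: "'a::linordered_ab_group_add \<Rightarrow>\<^sub>0 int"
  assumes "primitive f" "primitive g"
  shows "primitive (f * g)"
  using assms prime_elem_dvd_coeffs_mult prime_imp_prime_elem unfolding primitive_def by blast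

lemma dvd_coeffs_mult:
  fixes f g :: "'a::ab_group_add \<Rightarrow>\<^sub>0 'b::comm_ring_1"
  assumes "\<forall>k. p dvd Poly_Mapping.lookup f k"
  shows "p dvd Poly_Mapping.lookup (f * g) k"
  using assms by (simp add: lookup_mult_eq_sum_keys dvd_sum)

lemma primitive_dvd:
  fixes f g :: "'a::ab_group_add \<Rightarrow>\<^sub>0 int"
  assumes "f dvd g" "primitive g"
  shows "primitive f"
  using assms dvd_coeffs_mult unfolding primitive_def dvd_def by blast

lemma primitive_single_zero_iff:
  "primitive (Poly_Mapping.single 0 c) \<longleftrightarrow> is_unit c"
proof
  assume prim: "primitive (Poly_Mapping.single 0 c)"
  have dvd_c: "\<not> p dvd c" if "prime p" for p
  proof
    assume "p dvd c"
    then have "\<forall>k. p dvd Poly_Mapping.lookup (Poly_Mapping.single 0 c) k"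
      by (simp add: lookup_single when_def)
    then show False
      using prim that unfolding primitive_def by blast
  qed
  have "c \<noteq> 0"
    using dvd_c[of 2] by auto
  then show "is_unit c"
    using dvd_c prime_divisor_exists by blast
next
  assume "is_unit c"
  then have "\<not> p dvd c" if "prime p" for p
    using that dvd_unit_imp_unit not_prime_unit by blast
  then show "primitive (Poly_Mapping.single 0 c)"
    unfolding primitive_def by (metis lookup_single_eq)
qed

lemma primitive_part_exists:
  fixes F :: "'a::ab_group_add \<Rightarrow>\<^sub>0 int"
  assumes "F \<noteq> 0"
  obtains c G where "c \<noteq> 0" "primitive G" "F = Poly_Mapping.single 0 c * G"
proof -
  define c where "c = Gcd (Poly_Mapping.lookup F ` Poly_Mapping.keys F)"
  obtain k where "k \<in> Poly_Mapping.keys F"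
    using assms by fastforce
  then have "c \<noteq> 0"
    by (auto simp: c_def Gcd_0_iff image_subset_iff in_keys_iff)
  have c_dvd: "c dvd Poly_Mapping.lookup F k" for k
    by (cases "k \<in> Poly_Mapping.keys F") (auto simp: c_def in_keys_iff)
  define G where "G = Poly_Mapping.map (\<lambda>x. x div c) F"
  have lookup_F: "Poly_Mapping.lookup F k = c * Poly_Mapping.lookup G k" for k
    by (simp add: G_def Poly_Mapping.map.rep_eq when_def c_dvd)
  then have F_eq: "F = Poly_Mapping.single 0 c * G"
    by (simp add: poly_mapping_eq_iff fun_eq_iff lookup_single_zero_mult)
  have "primitive G"
    unfolding primitive_def
  proof (intro allI impI notI)
    fix p :: int
    assume "prime p" and p_dvd: "\<forall>k. p dvd Poly_Mapping.lookup G k"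
    have "c * p dvd c * Poly_Mapping.lookup G k" for k
      using p_dvd by (simp add: mult_dvd_mono)
    then have dvd_F: "p * c dvd Poly_Mapping.lookup F k" for k
      by (simp add: lookup_F mult.commute[of p])
    have "p * c dvd 1 * c"
      unfolding mult_1 c_def by (rule Gcd_greatest) (auto simp flip: c_def intro: dvd_F)
    then have "p dvd 1"
      using \<open>c \<noteq> 0\<close> by (subst (asm) dvd_times_right_cancel_iff)
    with \<open>prime p\<close> show False
      by (simp add: not_prime_unit)
  qed
  with \<open>c \<noteq> 0\<close> F_eq show ?thesis
    using that by blast
qed

lemma is_unit_if_primitive_scaled_eq:
  fixes F G :: "'a::ab_group_add \<Rightarrow>\<^sub>0 int"
  assumes "primitive F" "\<And>k. s * Poly_Mapping.lookup G k = r * Poly_Mapping.lookup F k"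
    and "coprime r s" "s \<noteq> 0"
  shows "is_unit s"
proof (rule ccontr)
  assume "\<not> is_unit s"
  then obtain p where p: "prime p" "p dvd s"
    using prime_divisor_exists \<open>s \<noteq> 0\<close> by blast
  then have "\<not> p dvd r"
    using \<open>coprime r s\<close> coprime_common_divisor not_prime_unit by blast
  have "p dvd Poly_Mapping.lookup F k" for k
    using p assms(2)[of k] \<open>\<not> p dvd r\<close> by (metis dvd_mult2 prime_dvd_mult_iff)
  with p \<open>primitive F\<close> show False
    unfolding primitive_def by blast
qed

lemma primitive_rat_multiple_unit:
  fixes F G :: "'a::ab_group_add \<Rightarrow>\<^sub>0 int"
  assumes F: "primitive F" and G: "primitive G"
    and eq: "(of_int_coeffs G :: 'a \<Rightarrow>\<^sub>0 rat) = Poly_Mapping.single 0 \<rho> * of_int_coeffs F"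
  obtains u where "is_unit u" "G = Poly_Mapping.single 0 u * F"
proof -
  obtain r s where rs: "quotient_of \<rho> = (r, s)"
    by fastforce
  have "s > 0" "coprime r s" "\<rho> = of_int r / of_int s"
    using rs quotient_of_denom_pos quotient_of_coprime quotient_of_div by blast+
  have "of_int (Poly_Mapping.lookup G k) = \<rho> * of_int (Poly_Mapping.lookup F k)" for k
    using eq by (metis lookup_of_int_coeffs lookup_single_zero_mult)
  then have "rat_of_int (s * Poly_Mapping.lookup G k) = rat_of_int (r * Poly_Mapping.lookup F k)"
    for k
    using \<open>s > 0\<close> unfolding \<open>\<rho> = of_int r / of_int s\<close> of_int_mult by simp
  then have scaled: "s * Poly_Mapping.lookup G k = r * Poly_Mapping.lookup F k" for k
    by (simp only: of_int_eq_iff)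
  have "r \<noteq> 0"
  proof
    assume "r = 0"
    then have "G = 0"
      using scaled \<open>s > 0\<close> by (simp add: poly_mapping_eq_iff fun_eq_iff)
    with G show False
      by (simp add: not_primitive_zero)
  qed
  have "is_unit s"
    using F scaled \<open>coprime r s\<close> \<open>s > 0\<close> by (intro is_unit_if_primitive_scaled_eq) auto
  with \<open>s > 0\<close> have "s = 1"
    by simp
  have "is_unit r"
    using G scaled \<open>coprime r s\<close> \<open>r \<noteq> 0\<close>
    by (intro is_unit_if_primitive_scaled_eq[where F = G and G = F and s = r and r = s])
        (auto simp: coprime_commute)
  moreover have "G = Poly_Mapping.single 0 r * F"
    using scaled \<open>s = 1\<close> by (simp add: poly_mapping_eq_iff fun_eq_iff lookup_single_zero_mult)
  ultimately show ?thesis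
    using that by blast
qed

lemma clear_denominators:
  fixes a :: "'a::ab_group_add \<Rightarrow>\<^sub>0 rat"
  obtains d F where "d \<noteq> 0" "of_int_coeffs F = Poly_Mapping.single 0 (of_int d) * a"
proof -
  define d where "d = (\<Prod>k\<in>Poly_Mapping.keys a. snd (quotient_of (Poly_Mapping.lookup a k)))"
  have "d > 0"
    unfolding d_def by (rule prod_pos) (simp add: quotient_of_denom_pos')
  have integral: "of_int d * Poly_Mapping.lookup a k \<in> \<int>" for k
  proof (cases "k \<in> Poly_Mapping.keys a")
    case True
    obtain n m where nm: "quotient_of (Poly_Mapping.lookup a k) = (n, m)"
      by fastforce
    have "m dvd d"
      unfolding d_def using True nm by (metis dvd_prodI finite_keys snd_conv)
    then obtain e where "d = m * e"
      by blast
    moreover have "m > 0"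
      using nm quotient_of_denom_pos by blast
    ultimately have "of_int d * Poly_Mapping.lookup a k = of_int (e * n)"
      using quotient_of_div[OF nm] by simp
    then show ?thesis
      by simp
  qed (simp add: in_keys_iff)
  define F where "F = Poly_Mapping.map (\<lambda>x. \<lfloor>of_int d * x\<rfloor>) a"
  have F_eq: "of_int_coeffs F = Poly_Mapping.single 0 (of_int d) * a"
  proof (rule poly_mapping_eqI)
    fix k
    obtain z where z: "of_int d * Poly_Mapping.lookup a k = of_int z"
      using integral[of k] by (blast elim: Ints_cases)
    have "Poly_Mapping.lookup F k = \<lfloor>of_int d * Poly_Mapping.lookup a k\<rfloor>"
      by (simp add: F_def Poly_Mapping.map.rep_eq when_def)
    then show "Poly_Mapping.lookup (of_int_coeffs F) k =
        Poly_Mapping.lookup (Poly_Mapping.single 0 (of_int d) * a) k"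
      by (simp add: lookup_of_int_coeffs lookup_single_zero_mult z del: single_of_int)
  qed
  show ?thesis
    using \<open>d > 0\<close> by (intro that[OF _ F_eq]) simp
qed

lemma rat_content_decomposition:
  fixes a :: "'a::ab_group_add \<Rightarrow>\<^sub>0 rat"
  assumes "a \<noteq> 0"
  obtains c G where "c \<noteq> 0" "primitive G" "a = Poly_Mapping.single 0 c * of_int_coeffs G"
proof -
  obtain d F where "d \<noteq> 0" and F: "of_int_coeffs F = Poly_Mapping.single 0 (of_int d) * a"
    using clear_denominators by blast
  have "Poly_Mapping.keys F = Poly_Mapping.keys (of_int_coeffs F :: 'a \<Rightarrow>\<^sub>0 rat)"
    by simp
  also have "\<dots> = Poly_Mapping.keys a"
    unfolding F using \<open>d \<noteq> 0\<close> by (simp add: keys_single_zero_mult del: single_of_int)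
  finally have "F \<noteq> 0"
    using assms by (metis keys_eq_empty)
  then obtain c G where "c \<noteq> 0" "primitive G" "F = Poly_Mapping.single 0 c * G"
    by (rule primitive_part_exists)
  have "a = Poly_Mapping.single 0 (1 / of_int d) * (Poly_Mapping.single 0 (of_int d) * a)"
    using \<open>d \<noteq> 0\<close> by (simp add: mult.assoc[symmetric] mult_single del: single_of_int)
  also have "\<dots> = Poly_Mapping.single 0 (1 / of_int d) *
      (Poly_Mapping.single 0 (of_int c) * of_int_coeffs G)"
    by (simp only: F[symmetric] \<open>F = _\<close> of_int_coeffs_mult of_int_coeffs_single)
  also have "\<dots> = Poly_Mapping.single 0 (of_int c / of_int d) * of_int_coeffs G"
    by (simp only: mult.assoc[symmetric] mult_single) simp
  finally have "a = Poly_Mapping.single 0 (of_int c / of_int d) * of_int_coeffs G" .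
  moreover have "of_int c / of_int d \<noteq> (0 :: rat)"
    using \<open>c \<noteq> 0\<close> \<open>d \<noteq> 0\<close> by simp
  ultimately show ?thesis
    using that \<open>primitive G\<close> by blast
qed

lemma integral_factorization_of_primitive:
  fixes g :: "'a::linordered_ab_group_add \<Rightarrow>\<^sub>0 int" and a b :: "'a \<Rightarrow>\<^sub>0 rat"
  assumes "primitive g" "of_int_coeffs g = a * b"
  obtains A B where "g = A * B" "Poly_Mapping.keys A = Poly_Mapping.keys a"
    "Poly_Mapping.keys B = Poly_Mapping.keys b"
proof -
  have "a \<noteq> 0" "b \<noteq> 0"
    using assms not_primitive_zero by auto
  obtain \<alpha> A where "\<alpha> \<noteq> 0" "primitive A" and a_eq: "a = Poly_Mapping.single 0 \<alpha> * of_int_coeffs A"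
    using rat_content_decomposition[OF \<open>a \<noteq> 0\<close>] by blast
  obtain \<beta> B where "\<beta> \<noteq> 0" "primitive B" and b_eq: "b = Poly_Mapping.single 0 \<beta> * of_int_coeffs B"
    using rat_content_decomposition[OF \<open>b \<noteq> 0\<close>] by blast
  have "a * b = (Poly_Mapping.single 0 \<alpha> * Poly_Mapping.single 0 \<beta>) *
      (of_int_coeffs A * of_int_coeffs B)"
    by (simp add: a_eq b_eq ac_simps)
  then have "of_int_coeffs g = Poly_Mapping.single 0 (\<alpha> * \<beta>) * of_int_coeffs (A * B)"
    by (simp add: assms(2) mult_single of_int_coeffs_mult)
  then obtain u where "is_unit u" "g = Poly_Mapping.single 0 u * (A * B)"
    using primitive_rat_multiple_unit[OF primitive_mult[OF \<open>primitive A\<close> \<open>primitive B\<close>]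
        \<open>primitive g\<close>] by blast
  moreover have "Poly_Mapping.keys (Poly_Mapping.single 0 u * A) = Poly_Mapping.keys a"
    "Poly_Mapping.keys B = Poly_Mapping.keys b"
    using \<open>is_unit u\<close> \<open>\<alpha> \<noteq> 0\<close> \<open>\<beta> \<noteq> 0\<close> by (auto simp: a_eq b_eq keys_single_zero_mult)
  ultimately show ?thesis
    using that by (metis mult.assoc)
qed

section \<open>Monoid algebras of Puiseux monoids\<close>

lemma monoid_algebra_mult_closed:
  assumes "\<And>a b. a \<in> M \<Longrightarrow> b \<in> M \<Longrightarrow> a + b \<in> M"
    and "f \<in> monoid_algebra M" "g \<in> monoid_algebra M"
  shows "f * g \<in> monoid_algebra M"
  using assms keys_mult[of f g] unfolding monoid_algebra_def by blast

lemma single_zero_in_monoid_algebra: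
  "0 \<in> M \<Longrightarrow> Poly_Mapping.single 0 c \<in> monoid_algebra M"
  by (simp add: monoid_algebra_def)

lemma monoid_algebra_keys_cong:
  "Poly_Mapping.keys f = Poly_Mapping.keys g \<Longrightarrow> f \<in> monoid_algebra M \<longleftrightarrow> g \<in> monoid_algebra M"
  by (simp add: monoid_algebra_def)

locale puiseux_monoid =
  fixes M :: "rat set"
  assumes zero_mem: "0 \<in> M"
    and add_mem: "a \<in> M \<Longrightarrow> b \<in> M \<Longrightarrow> a + b \<in> M"
    and nonneg: "a \<in> M \<Longrightarrow> 0 \<le> a"
begin

lemma mult_mem:
  "f \<in> monoid_algebra M \<Longrightarrow> g \<in> monoid_algebra M \<Longrightarrow> f * g \<in> monoid_algebra M"
  by (rule monoid_algebra_mult_closed[OF add_mem])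

lemma keys_subset_zero_if_unit_in:
  fixes f :: "rat \<Rightarrow>\<^sub>0 'b::idom"
  assumes "unit_in (monoid_algebra M) f"
  shows "Poly_Mapping.keys f \<subseteq> {0}"
proof -
  txt \<open>With \<open>f * g = 1\<close>, both the least and the greatest exponents of \<open>f\<close> and \<open>g\<close> add up to
    \<open>0\<close>; as all exponents are nonnegative, those of \<open>f\<close> vanish.\<close>
  obtain g where g: "g \<in> monoid_algebra M" and fg: "f * g = 1" and f: "f \<in> monoid_algebra M"
    using assms by (auto simp: unit_in_def)
  then have "f \<noteq> 0" "g \<noteq> 0"
    by auto
  have nonneg_keys: "0 \<le> k" if "k \<in> Poly_Mapping.keys h" "h \<in> monoid_algebra M" for h k
    using that nonneg by (auto simp: monoid_algebra_def)
  have "Min (Poly_Mapping.keys f) + Min (Poly_Mapping.keys g) = 0"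
    "Max (Poly_Mapping.keys f) + Max (Poly_Mapping.keys g) = 0"
    using Min_keys_add_in_keys_mult[OF \<open>f \<noteq> 0\<close> \<open>g \<noteq> 0\<close>]
      Max_keys_add_in_keys_mult[OF \<open>f \<noteq> 0\<close> \<open>g \<noteq> 0\<close>] by (simp_all add: fg)
  moreover have "0 \<le> Min (Poly_Mapping.keys f)" "0 \<le> Min (Poly_Mapping.keys g)"
    using f g \<open>f \<noteq> 0\<close> \<open>g \<noteq> 0\<close> by (auto intro: nonneg_keys)
  moreover have "Min (Poly_Mapping.keys f) \<le> Max (Poly_Mapping.keys f)"
    "Min (Poly_Mapping.keys g) \<le> Max (Poly_Mapping.keys g)"
    using \<open>f \<noteq> 0\<close> \<open>g \<noteq> 0\<close> by simp_all
  ultimately have "Min (Poly_Mapping.keys f) = 0" "Max (Poly_Mapping.keys f) = 0"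
    by linarith+
  then show ?thesis
    using Min_le[of "Poly_Mapping.keys f"] Max_ge[of "Poly_Mapping.keys f"] by fastforce
qed

lemma unit_in_monoid_algebra_field_iff:
  fixes f :: "rat \<Rightarrow>\<^sub>0 'b::field"
  shows "unit_in (monoid_algebra M) f \<longleftrightarrow>
    f \<in> monoid_algebra M \<and> f \<noteq> 0 \<and> Poly_Mapping.keys f \<subseteq> {0}"
proof
  assume "unit_in (monoid_algebra M) f"
  then show "f \<in> monoid_algebra M \<and> f \<noteq> 0 \<and> Poly_Mapping.keys f \<subseteq> {0}"
    using keys_subset_zero_if_unit_in by (auto simp: unit_in_def)
next
  assume f: "f \<in> monoid_algebra M \<and> f \<noteq> 0 \<and> Poly_Mapping.keys f \<subseteq> {0}"
  then have f_eq: "f = Poly_Mapping.single 0 (Poly_Mapping.lookup f 0)"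
    by (blast intro: keys_subset_zero_imp_single)
  with f have "Poly_Mapping.lookup f 0 \<noteq> 0"
    by (metis single_zero)
  then have "f * Poly_Mapping.single 0 (1 / Poly_Mapping.lookup f 0) = 1"
    by (subst f_eq) (simp add: mult_single)
  then show "unit_in (monoid_algebra M) f"
    using f single_zero_in_monoid_algebra[OF zero_mem] by (auto simp: unit_in_def)
qed

lemma unit_in_single_zero:
  assumes "is_unit c"
  shows "unit_in (monoid_algebra M) (Poly_Mapping.single 0 c)"
proof -
  obtain d where "1 = c * d"
    using assms by (rule dvdE)
  then have "Poly_Mapping.single 0 c * Poly_Mapping.single 0 d = 1"
    by (simp add: mult_single)
  then show ?thesis
    by (auto simp: unit_in_def single_zero_in_monoid_algebra[OF zero_mem])
qed

lemma of_int_coeffs_not_unit_in: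
  fixes g :: "rat \<Rightarrow>\<^sub>0 int"
  assumes "primitive g" "\<not> unit_in (monoid_algebra M) g"
  shows "\<not> unit_in (monoid_algebra M) (of_int_coeffs g :: rat \<Rightarrow>\<^sub>0 rat)"
proof
  assume "unit_in (monoid_algebra M) (of_int_coeffs g :: rat \<Rightarrow>\<^sub>0 rat)"
  then have "Poly_Mapping.keys g \<subseteq> {0}"
    using keys_subset_zero_if_unit_in by fastforce
  then have g_eq: "g = Poly_Mapping.single 0 (Poly_Mapping.lookup g 0)"
    by (rule keys_subset_zero_imp_single)
  then have "is_unit (Poly_Mapping.lookup g 0)"
    using \<open>primitive g\<close> primitive_single_zero_iff by metis
  with assms(2) g_eq show False
    by (metis unit_in_single_zero)
qed

lemma irreducible_in_of_int_coeffs: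
  fixes g :: "rat \<Rightarrow>\<^sub>0 int"
  assumes irr: "irreducible_in (monoid_algebra M) g" and "primitive g"
  shows "irreducible_in (monoid_algebra M) (of_int_coeffs g :: rat \<Rightarrow>\<^sub>0 rat)"
proof -
  have g: "g \<in> monoid_algebra M" "g \<noteq> 0" "\<not> unit_in (monoid_algebra M) g"
    and split: "\<And>A B. A \<in> monoid_algebra M \<Longrightarrow> B \<in> monoid_algebra M \<Longrightarrow> g = A * B \<Longrightarrow>
      unit_in (monoid_algebra M) A \<or> unit_in (monoid_algebra M) B"
    using irr by (auto simp: irreducible_in_def)
  have "unit_in (monoid_algebra M) a \<or> unit_in (monoid_algebra M) b"
    if a: "a \<in> monoid_algebra M" and b: "b \<in> monoid_algebra M" and ab: "of_int_coeffs g = a * b"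
    for a b :: "rat \<Rightarrow>\<^sub>0 rat"
  proof -
    obtain A B where "g = A * B" and keys_A: "Poly_Mapping.keys A = Poly_Mapping.keys a"
      and keys_B: "Poly_Mapping.keys B = Poly_Mapping.keys b"
      using integral_factorization_of_primitive[OF \<open>primitive g\<close> ab] by blast
    moreover have "A \<in> monoid_algebra M" "B \<in> monoid_algebra M"
      using a b keys_A keys_B monoid_algebra_keys_cong by blast+
    ultimately have "unit_in (monoid_algebra M) A \<or> unit_in (monoid_algebra M) B"
      using split by blast
    then have "Poly_Mapping.keys a \<subseteq> {0} \<or> Poly_Mapping.keys b \<subseteq> {0}"
      using keys_subset_zero_if_unit_in keys_A keys_B by metis
    moreover have "a \<noteq> 0" "b \<noteq> 0"
      using ab g(2) by auto
    ultimately show ?thesis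
      using a b by (auto simp: unit_in_monoid_algebra_field_iff)
  qed
  then show ?thesis
    using g \<open>primitive g\<close> of_int_coeffs_not_unit_in
    by (auto simp: irreducible_in_def monoid_algebra_def)
qed

lemma atomic_in_rat_if_atomic_in_int:
  assumes "atomic_in (monoid_algebra M :: (rat \<Rightarrow>\<^sub>0 int) set)"
  shows "atomic_in (monoid_algebra M :: (rat \<Rightarrow>\<^sub>0 rat) set)"
  unfolding atomic_in_def
proof (intro ballI impI)
  fix f :: "rat \<Rightarrow>\<^sub>0 rat"
  assume f: "f \<in> monoid_algebra M" and "f \<noteq> 0 \<and> \<not> unit_in (monoid_algebra M) f"
  then have "f \<noteq> 0" "\<not> unit_in (monoid_algebra M) f"
    by blast+
  obtain c G where "c \<noteq> 0" "primitive G" and f_eq: "f = Poly_Mapping.single 0 c * of_int_coeffs G"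
    using rat_content_decomposition[OF \<open>f \<noteq> 0\<close>] by blast
  have keys_G: "Poly_Mapping.keys G = Poly_Mapping.keys f"
    using \<open>c \<noteq> 0\<close> by (simp add: f_eq keys_single_zero_mult)
  then have "G \<in> monoid_algebra M" "G \<noteq> 0"
    using f \<open>f \<noteq> 0\<close> monoid_algebra_keys_cong by (blast, metis keys_eq_empty)
  moreover have "\<not> unit_in (monoid_algebra M) G"
    using keys_subset_zero_if_unit_in keys_G f \<open>f \<noteq> 0\<close> \<open>\<not> unit_in (monoid_algebra M) f\<close>
    by (metis unit_in_monoid_algebra_field_iff)
  ultimately obtain gs where "gs \<noteq> []" and irr: "\<forall>g\<in>set gs. irreducible_in (monoid_algebra M) g"
    and "prod_list gs = G"
    using assms unfolding atomic_in_def by blast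
  then obtain g1 gs' where gs: "gs = g1 # gs'"
    by (cases gs) auto
  have "irreducible_in (monoid_algebra M) (of_int_coeffs g :: rat \<Rightarrow>\<^sub>0 rat)" if "g \<in> set gs" for g
    using irr that \<open>primitive G\<close> \<open>prod_list gs = G\<close>
    by (metis irreducible_in_of_int_coeffs primitive_dvd prod_list_dvd)
  moreover have "Poly_Mapping.single 0 c \<noteq> 0"
    using \<open>c \<noteq> 0\<close> by (metis lookup_single_eq lookup_zero)
  then have "unit_in (monoid_algebra M) (Poly_Mapping.single 0 c)"
    using \<open>c \<noteq> 0\<close> by (simp add: unit_in_monoid_algebra_field_iff single_zero_in_monoid_algebra[OF zero_mem])
  ultimately have "\<forall>h\<in>set (Poly_Mapping.single 0 c * of_int_coeffs g1 # map of_int_coeffs gs').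
      irreducible_in (monoid_algebra M) h"
    using irreducible_in_unit_mult[OF mult_mem] gs by auto
  moreover have "prod_list (Poly_Mapping.single 0 c * of_int_coeffs g1 # map of_int_coeffs gs') = f"
    using \<open>prod_list gs = G\<close>
    by (simp add: f_eq gs mult.assoc flip: of_int_coeffs_mult of_int_coeffs_prod_list)
  ultimately show
    "\<exists>xs. xs \<noteq> [] \<and> (\<forall>a\<in>set xs. irreducible_in (monoid_algebra M) a) \<and> prod_list xs = f"
    by blast
qed

end

lemma puiseux_monoid_puiseux_exp_monoid:
  assumes "0 \<le> q"
  shows "puiseux_monoid (puiseux_exp_monoid q)"
proof
  fix a
  assume "a \<in> puiseux_exp_monoid q"
  then show "0 \<le> a"
    by induction (use assms in auto)
qed (auto intro: puiseux_exp_monoid.intros)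

theorem proposition2p1:
  fixes q :: rat
  assumes "q > 0"
    and "atomic_in (monoid_algebra (puiseux_exp_monoid q) :: (rat \<Rightarrow>\<^sub>0 int) set)"
  shows "atomic_in (monoid_algebra (puiseux_exp_monoid q) :: (rat \<Rightarrow>\<^sub>0 rat) set)"
  using puiseux_monoid.atomic_in_rat_if_atomic_in_int[OF puiseux_monoid_puiseux_exp_monoid] assms
  by simp

end
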